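(* Let $N\cong\mathbb{Z}^3$ and let $P$ be a minimal Fano polytope in $N_\mathbb{R}$ which contains two triangles $T_1,T_2$, whose vertices are vertices of $P$, lying in distinct two-dimensional linear subspaces $L_1\ne L_2$, such that each $T_j$ is equivalent (under an isomorphism of lattices $\mathbb{Z}^2\to N\cap L_j$) to $\mathrm{conv}\{(1,0),(0,1),(-2,-1)\}$ (the Fano triangle of $\mathbb{P}(1,1,2)$). Then, up to the action of $GL(3,\mathbb{Z})$, $P$ is the convex hull of the columns of one of $$\begin{pmatrix}1&0&0&-2&-2\\0&1&0&-1&0\\0&0&1&0&-1\end{pmatrix}\quad\text{or}\quad\begin{pmatrix}1&0&-2&1&-3\\0&1&-1&1&-1\\0&0&0&2&-2\end{pmatrix}.$$
   Context: A Fano polytope is a three-dimensional convex polytope $P\subset N_\mathbb{R}$ with vertices in $N$ such that the origin is the only lattice point in the interior of $P$. It is minimal if, for every vertex $\rho$ of $P$, the polytope $\mathrm{conv}((P\cap N)\setminus\{\rho\})$ is not a Fano polytope. Polytopes are identified up to $GL(3,\mathbb{Z})$ (after choosing a basis of $N$). *)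

theory Defs
  imports "HOL-Analysis.Analysis"
begin

definition lattice3 :: "(real^3) set" where
  "lattice3 = {x. \<forall>i. x $ i \<in> \<int>}"

definition lattice2 :: "(real^2) set" where
  "lattice2 = {x. \<forall>i. x $ i \<in> \<int>}"

definition fano_polytope :: "(real^3) set \<Rightarrow> bool" where
  "fano_polytope P \<longleftrightarrow>
     (\<exists>V. finite V \<and> V \<subseteq> lattice3 \<and> P = convex hull V) \<and>
     aff_dim P = 3 \<and>
     interior P \<inter> lattice3 = {0}"

definition minimal_fano_polytope :: "(real^3) set \<Rightarrow> bool" where
  "minimal_fano_polytope P \<longleftrightarrow> fano_polytope P \<and>
     (\<forall>\<rho>. \<rho> extreme_point_of P \<longrightarrow>
        \<not> fano_polytope (convex hull ((P \<inter> lattice3) - {\<rho>})))"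

definition triangle_P112 :: "(real^2) set" where
  "triangle_P112 = convex hull {vector [1, 0], vector [0, 1], vector [-2, -1]}"

definition P112_triangle_in :: "(real^3) set \<Rightarrow> (real^3) set \<Rightarrow> bool" where
  "P112_triangle_in L T \<longleftrightarrow> subspace L \<and> dim L = 2 \<and>
     (\<exists>f :: real^2 \<Rightarrow> real^3. linear f \<and> inj f \<and> range f = L \<and>
        f ` lattice2 = lattice3 \<inter> L \<and> f ` triangle_P112 = T)"

definition GL3Z :: "(real^3^3) set" where
  "GL3Z = {M. (\<forall>i j. M $ i $ j \<in> \<int>) \<and> \<bar>det M\<bar> = 1}"

definition GL3Z_equivalent :: "(real^3) set \<Rightarrow> (real^3) set \<Rightarrow> bool" where
  "GL3Z_equivalent P Q \<longleftrightarrow> (\<exists>M\<in>GL3Z. P = (\<lambda>x. M *v x) ` Q)"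

definition polytopeA :: "(real^3) set" where
  "polytopeA = convex hull {vector [1,0,0], vector [0,1,0], vector [0,0,1],
                            vector [-2,-1,0], vector [-2,0,-1]}"

definition polytopeB :: "(real^3) set" where
  "polytopeB = convex hull {vector [1,0,0], vector [0,1,0], vector [-2,-1,0],
                            vector [1,1,2], vector [-3,-1,-2]}"

end

theory Submission
  imports Defs
begin

text \<open>Write the triangles as \<open>conv {a, b, -2a - b}\<close> and \<open>conv {s, t, -2s - t}\<close>, where
  \<open>(a, b)\<close> and \<open>(s, t)\<close> are bases of the lattice points of the two planes. Minimality means that
  for every vertex \<open>\<rho>\<close> of \<open>P\<close> some nonzero functional is nonnegative on all lattice points of
  \<open>P\<close> other than \<open>\<rho>\<close>, so every vertex belongs to any positively spanning set of lattice
  points of \<open>P\<close>. Applied to a vertex of one triangle lying outside the other plane, this puts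
  the apex \<open>a\<close> (the vertex whose negative is the midpoint of the other two) into the other plane
  and vice versa; as both apexes are primitive lattice vectors, \<open>s = a\<close>, and then
  \<open>P = conv {a, b, -2a - b, t, -2a - t}\<close>.

  In the coordinates \<open>(a, b, t)\<close> the polytope \<open>P\<close> becomes \<open>polytopeA\<close> and the lattice
  \<open>N\<close> becomes a lattice \<open>\<Lambda> \<supseteq> \<int>\<^sup>3\<close> with \<open>\<Lambda> \<inter> {z = 0} = \<int>\<^sup>2\<close>, hence generated over
  \<open>\<int>\<^sup>3\<close> by a point \<open>(J, K, 1)/N\<close>. The functional attached to the vertex \<open>t\<close> forbids points
  of \<open>\<Lambda>\<close> in \<open>polytopeA\<close> strictly between heights 0 and 1; a lattice point count (done by
  computation for \<open>N \<le> 11\<close>) leaves only \<open>N = 1\<close>, which gives \<open>polytopeA\<close>, and \<open>N = 2\<close> with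
  \<open>J, K\<close> odd, which gives \<open>polytopeB\<close>.\<close>

lemma lattice3_iff: "x \<in> lattice3 \<longleftrightarrow> x$1 \<in> \<int> \<and> x$2 \<in> \<int> \<and> x$3 \<in> \<int>"
  by (simp add: lattice3_def forall_3)

lemma lattice3_diff: "x \<in> lattice3 \<Longrightarrow> y \<in> lattice3 \<Longrightarrow> x - y \<in> lattice3"
  by (simp add: lattice3_iff)

lemma lattice3_add: "x \<in> lattice3 \<Longrightarrow> y \<in> lattice3 \<Longrightarrow> x + y \<in> lattice3"
  by (simp add: lattice3_iff)

lemma lattice3_scaleR: "c \<in> \<int> \<Longrightarrow> x \<in> lattice3 \<Longrightarrow> c *\<^sub>R x \<in> lattice3"
  by (simp add: lattice3_iff)

lemma vector_of_int_in_lattice3 [simp]: "vector [of_int i, of_int j, of_int k] \<in> lattice3"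
  by (simp add: lattice3_iff)

lemma finite_bounded_Int_lattice3:
  assumes "bounded S"
  shows "finite (S \<inter> lattice3)"
proof -
  obtain B where B: "\<And>x. x \<in> S \<Longrightarrow> norm x \<le> B" using assms bounded_iff by blast
  define K where "K = \<lceil>B\<rceil>"
  have "S \<inter> lattice3 \<subseteq> (\<lambda>(i, j, k). vector [of_int i, of_int j, of_int k]) ` ({-K..K} \<times> {-K..K} \<times> {-K..K})"
  proof
    fix x assume x: "x \<in> S \<inter> lattice3"
    then obtain i j k where ijk: "x$1 = of_int i" "x$2 = of_int j" "x$3 = of_int k"
      by (metis IntD2 Ints_cases lattice3_iff)
    have "\<bar>x$m\<bar> \<le> B" for m using B[of x] x component_le_norm_cart[of x m] by auto
    from this[of 1] this[of 2] this[of 3] have "i \<in> {-K..K}" "j \<in> {-K..K}" "k \<in> {-K..K}"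
      unfolding K_def ijk by (auto simp: abs_le_iff) linarith+
    moreover have "x = vector [of_int i, of_int j, of_int k]"
      using ijk by (simp add: vec_eq_iff forall_3)
    ultimately show "x \<in> (\<lambda>(i, j, k). vector [of_int i, of_int j, of_int k]) ` ({-K..K} \<times> {-K..K} \<times> {-K..K})"
      by force
  qed
  then show ?thesis by (rule finite_subset) simp
qed

lemma span_pair_iff: "x \<in> span {a, b} \<longleftrightarrow> (\<exists>u v. x = u *\<^sub>R a + v *\<^sub>R b)"
proof
  assume "x \<in> span {a, b}"
  then obtain u where "x - u *\<^sub>R a \<in> span {b}" using span_breakdown_eq by blast
  then obtain v where "x - u *\<^sub>R a = v *\<^sub>R b" by (auto simp: span_singleton)
  then show "\<exists>u v. x = u *\<^sub>R a + v *\<^sub>R b" by (metis diff_add_cancel add.commute)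
qed (auto intro: span_add span_scale span_base)

lemma span_triple_iff: "x \<in> span {a, b, c} \<longleftrightarrow> (\<exists>u v w. x = u *\<^sub>R a + v *\<^sub>R b + w *\<^sub>R c)"
proof
  assume "x \<in> span {a, b, c}"
  then obtain u where "x - u *\<^sub>R a \<in> span {b, c}" using span_breakdown_eq by blast
  then obtain v w where "x - u *\<^sub>R a = v *\<^sub>R b + w *\<^sub>R c" using span_pair_iff by blast
  then show "\<exists>u v w. x = u *\<^sub>R a + v *\<^sub>R b + w *\<^sub>R c" by (metis diff_add_cancel add.commute add.assoc)
qed (auto intro: span_add span_scale span_base)

lemma independent_pair_scaleR_eq_0:
  fixes a b :: "'a::real_vector"
  assumes "independent {a, b}" "a \<noteq> b" "u *\<^sub>R a + v *\<^sub>R b = 0"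
  shows "u = 0 \<and> v = 0"
proof -
  have b: "b \<noteq> 0" and a: "a \<notin> span {b}"
    using assms(1,2) by (auto simp: independent_insert dependent_single)
  have "u = 0"
  proof (rule ccontr)
    assume "u \<noteq> 0"
    then have "a = (1 / u) *\<^sub>R (u *\<^sub>R a)" by simp
    also have "u *\<^sub>R a = - (v *\<^sub>R b)" using assms(3) by (simp add: eq_neg_iff_add_eq_0)
    finally have "a = (- v / u) *\<^sub>R b" by simp
    then show False using a span_singleton by blast
  qed
  then show ?thesis using assms(3) b by simp
qed

lemma dim_span_pair:
  fixes a b :: "'a::euclidean_space"
  assumes "independent {a, b}" "a \<noteq> b"
  shows "dim (span {a, b}) = 2"
  using dim_span_eq_card_independent[OF assms(1)] assms(2) by simp

lemma span_pair_eq: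
  fixes a b s t :: "'a::euclidean_space"
  assumes "independent {a, b}" "a \<noteq> b" "a \<in> span {s, t}" "b \<in> span {s, t}"
  shows "span {a, b} = span {s, t}"
proof (rule subspace_dim_equal)
  show "span {a, b} \<subseteq> span {s, t}" using assms(3,4) by (simp add: span_minimal)
  have "dim (span {s, t}) \<le> card {s, t}" by (simp add: dim_le_card')
  also have "\<dots> \<le> 2" by (simp add: card_insert_if)
  finally show "dim (span {s, t}) \<le> dim (span {a, b})" using dim_span_pair[OF assms(1,2)] by simp
qed simp_all

lemma span_insert_eq_UNIV:
  fixes a b t :: "real^3"
  assumes "independent {a, b}" "a \<noteq> b" "t \<notin> span {a, b}"
  shows "span {a, b, t} = UNIV"
proof -
  have "dim {t, a, b} = 3"
    using assms dim_span_pair[OF assms(1,2)] by (simp add: dim_insert)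
  then show ?thesis using dim_eq_full[of "{t, a, b}"] by (simp add: insert_commute)
qed

lemma Ints_mult_eq_1D:
  fixes x y :: "'a::ring_char_0"
  assumes "x \<in> \<int>" "y \<in> \<int>" "x * y = 1"
  shows "x = 1 \<or> x = -1"
proof -
  obtain I J where IJ: "x = of_int I" "y = of_int J" using assms(1,2) Ints_cases by metis
  then have "I * J = 1" using assms(3) by (metis of_int_eq_1_iff of_int_mult)
  then show ?thesis using IJ(1) zmult_eq_1_iff by auto
qed

section \<open>The Fano triangle of \<open>\<bbbP>(1,1,2)\<close>\<close>

lemma P112_triangle_not_collinear:
  fixes a b :: "'a::euclidean_space"
  assumes "independent {a, b}" "a \<noteq> b"
  shows "\<not> collinear {a, b, -2 *\<^sub>R a - b}"
proof
  note indep = independent_pair_scaleR_eq_0[OF assms]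
  assume "collinear {a, b, -2 *\<^sub>R a - b}"
  then have "collinear {0, a - b, (-2 *\<^sub>R a - b) - b}"
    using collinear_3[of a b "-2 *\<^sub>R a - b"] by simp
  then consider "a - b = 0" | c where "(-2 *\<^sub>R a - b) - b = c *\<^sub>R (a - b)"
    unfolding collinear_lemma by (metis scaleR_zero_left)
  then show False
  proof cases
    case 1 then show False using assms(2) by simp
  next
    case 2
    then have "(-2 - c) *\<^sub>R a + (c - 2) *\<^sub>R b = 0" by (simp add: algebra_simps scaleR_2)
    then show False using indep by fastforce
  qed
qed

lemma extreme_point_of_P112_triangle:
  fixes a b :: "'a::euclidean_space"
  assumes "independent {a, b}" "a \<noteq> b" "x \<in> {a, b, -2 *\<^sub>R a - b}"
  shows "x extreme_point_of convex hull {a, b, -2 *\<^sub>R a - b}"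
  using extreme_point_of_convex_hull_affine_independent affine_dependent_imp_collinear_3
    P112_triangle_not_collinear[OF assms(1,2)] assms(3) by blast

lemma P112_triangle_distinct:
  fixes a b :: "'a::real_vector"
  assumes "independent {a, b}" "a \<noteq> b"
  shows "a \<noteq> 0" "b \<noteq> -a" "-2 *\<^sub>R a - b \<noteq> a" "-2 *\<^sub>R a - b \<noteq> -a" "-2 *\<^sub>R a - b \<noteq> b"
proof -
  note indep = independent_pair_scaleR_eq_0[OF assms]
  show "a \<noteq> 0" using indep[of 1 0] by auto
  show "b \<noteq> -a" using indep[of 1 1] by (auto simp: eq_neg_iff_add_eq_0 add.commute)
  show "-2 *\<^sub>R a - b \<noteq> a"
  proof
    assume h: "-2 *\<^sub>R a - b = a"
    have "3 *\<^sub>R a + 1 *\<^sub>R b = a - (-2 *\<^sub>R a - b)"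
      using scaleR_add_left[of 1 2 a] by (simp add: algebra_simps)
    also have "\<dots> = 0" using h by simp
    finally show False using indep by fastforce
  qed
  show "-2 *\<^sub>R a - b \<noteq> -a"
  proof
    assume h: "-2 *\<^sub>R a - b = -a"
    have "1 *\<^sub>R a + 1 *\<^sub>R b = -a - (-2 *\<^sub>R a - b)" by (simp add: algebra_simps scaleR_2)
    also have "\<dots> = 0" using h by simp
    finally show False using indep by fastforce
  qed
  show "-2 *\<^sub>R a - b \<noteq> b"
  proof
    assume h: "-2 *\<^sub>R a - b = b"
    have "2 *\<^sub>R a + 2 *\<^sub>R b = - (-2 *\<^sub>R a - b - b)" by (simp add: algebra_simps scaleR_2)
    also have "\<dots> = 0" using h by simp
    finally show False using indep by fastforce
  qed
qed

lemma midpoint_P112_triangle: "midpoint b (-2 *\<^sub>R a - b) = - a"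
  by (simp add: midpoint_def algebra_simps)

lemma minus_P112_apex_not_extreme:
  fixes a b :: "'a::real_vector"
  assumes "independent {a, b}" "a \<noteq> b" "b \<in> S" "-2 *\<^sub>R a - b \<in> S"
  shows "\<not> (-a) extreme_point_of S"
proof
  assume "(-a) extreme_point_of S"
  moreover have "midpoint b (-2 *\<^sub>R a - b) \<in> open_segment b (-2 *\<^sub>R a - b)"
    using P112_triangle_distinct(5)[OF assms(1,2)] by simp
  ultimately show False
    using assms(3,4) unfolding extreme_point_of_def midpoint_P112_triangle by blast
qed

definition plane_lattice_basis :: "real^3 \<Rightarrow> real^3 \<Rightarrow> bool" where
  "plane_lattice_basis a b \<longleftrightarrow> a \<in> lattice3 \<and> b \<in> lattice3 \<and> independent {a, b} \<and> a \<noteq> b \<and>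
     (\<forall>x \<in> lattice3 \<inter> span {a, b}. \<exists>u v. u \<in> \<int> \<and> v \<in> \<int> \<and> x = u *\<^sub>R a + v *\<^sub>R b)"

lemma linear_vector2_eq:
  fixes f :: "real^2 \<Rightarrow> 'a::real_vector"
  assumes "linear f"
  shows "f (vector [u, v]) = u *\<^sub>R f (vector [1, 0]) + v *\<^sub>R f (vector [0, 1])"
proof -
  have "vector [u, v] = u *\<^sub>R vector [1, 0] + v *\<^sub>R (vector [0, 1] :: real^2)"
    by (simp add: vec_eq_iff forall_2)
  then have "f (vector [u, v]) = f (u *\<^sub>R vector [1, 0] + v *\<^sub>R vector [0, 1])" by (rule arg_cong)
  also have "\<dots> = u *\<^sub>R f (vector [1, 0]) + v *\<^sub>R f (vector [0, 1])"
    by (simp only: linear_add[OF assms] linear_cmul[OF assms])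
  finally show ?thesis .
qed

lemma vector2_cases: "\<exists>u v. z = vector [u, v]" for z :: "real^2"
  by (intro exI[of _ "z$1"] exI[of _ "z$2"]) (simp add: vec_eq_iff forall_2)

lemma range_linear_vector2:
  fixes f :: "real^2 \<Rightarrow> 'a::real_vector"
  assumes "linear f"
  shows "range f = span {f (vector [1, 0]), f (vector [0, 1])}"
proof
  show "range f \<subseteq> span {f (vector [1, 0]), f (vector [0, 1])}"
  proof
    fix x assume "x \<in> range f"
    then obtain z where "x = f z" by blast
    moreover obtain u v where "z = vector [u, v]" using vector2_cases by blast
    ultimately show "x \<in> span {f (vector [1, 0]), f (vector [0, 1])}"
      unfolding span_pair_iff using linear_vector2_eq[OF assms, of u v] by auto
  qed
  show "span {f (vector [1, 0]), f (vector [0, 1])} \<subseteq> range f"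
  proof
    fix x assume "x \<in> span {f (vector [1, 0]), f (vector [0, 1])}"
    then obtain u v where "x = u *\<^sub>R f (vector [1, 0]) + v *\<^sub>R f (vector [0, 1])"
      unfolding span_pair_iff by blast
    then have "x = f (vector [u, v])" using linear_vector2_eq[OF assms, of u v] by simp
    then show "x \<in> range f" by blast
  qed
qed

lemma independent_image_vector2_basis:
  fixes f :: "real^2 \<Rightarrow> 'a::real_vector"
  assumes "linear f" "inj f"
  shows "independent {f (vector [1, 0]), f (vector [0, 1])}" "f (vector [1, 0]) \<noteq> f (vector [0, 1])"
proof -
  let ?a = "f (vector [1, 0])" and ?b = "f (vector [0, 1])"
  have zero: "u = 0 \<and> v = 0" if "u *\<^sub>R ?a + v *\<^sub>R ?b = 0" for u v
  proof -
    have "f (vector [u, v]) = f 0"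
      using that linear_vector2_eq[OF assms(1), of u v] linear_0[OF assms(1)] by simp
    then have "vector [u, v] = (0 :: real^2)" by (rule injD[OF assms(2)])
    then show ?thesis by (metis vector_2 zero_index)
  qed
  have "?a \<notin> span {?b}"
  proof
    assume "?a \<in> span {?b}"
    then obtain k where "?a = k *\<^sub>R ?b" by (auto simp: span_singleton)
    then show False using zero[of 1 "-k"] by simp
  qed
  moreover have "?b \<noteq> 0" using zero[of 0 1] by auto
  ultimately show "independent {?a, ?b}" "?a \<noteq> ?b" by (auto simp: independent_insert span_base)
qed

lemma P112_triangle_inE:
  assumes "P112_triangle_in L T"
  obtains a b where "plane_lattice_basis a b" "L = span {a, b}"
    "T = convex hull {a, b, -2 *\<^sub>R a - b}"
proof -
  from assms obtain f :: "real^2 \<Rightarrow> real^3" where f: "linear f" "inj f" "range f = L"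
    "f ` lattice2 = lattice3 \<inter> L" "f ` triangle_P112 = T"
    unfolding P112_triangle_in_def by blast
  define a where "a = f (vector [1, 0])"
  define b where "b = f (vector [0, 1])"
  have f_eq: "f (vector [u, v]) = u *\<^sub>R a + v *\<^sub>R b" for u v
    unfolding a_def b_def by (rule linear_vector2_eq[OF f(1)])
  have L: "L = span {a, b}" using range_linear_vector2[OF f(1)] f(3) unfolding a_def b_def by simp
  have lattice: "\<exists>u v. u \<in> \<int> \<and> v \<in> \<int> \<and> x = u *\<^sub>R a + v *\<^sub>R b"
    if "x \<in> lattice3 \<inter> span {a, b}" for x
  proof -
    have "x \<in> f ` lattice2" using that f(4) L by simp
    then obtain z where "z \<in> lattice2" "x = f z" by blast
    moreover obtain u v where "z = vector [u, v]" using vector2_cases by blast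
    ultimately have "x = u *\<^sub>R a + v *\<^sub>R b" "u \<in> \<int>" "v \<in> \<int>"
      using f_eq by (simp_all add: lattice2_def forall_2)
    then show ?thesis by blast
  qed
  have "vector [1, 0] \<in> lattice2" "vector [0, 1] \<in> lattice2"
    by (simp_all add: lattice2_def forall_2)
  then have "a \<in> lattice3" "b \<in> lattice3" using f(4) unfolding a_def b_def by blast+
  then have "plane_lattice_basis a b"
    using independent_image_vector2_basis[OF f(1,2)] lattice
    unfolding plane_lattice_basis_def a_def b_def by blast
  moreover have "T = convex hull {a, b, -2 *\<^sub>R a - b}"
  proof -
    have "f ` {vector [1, 0], vector [0, 1], vector [-2, -1]} = {a, b, -2 *\<^sub>R a - b}"
      using f_eq[of "-2" "-1"] by (simp add: a_def b_def)
    then show ?thesis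
      using f(5) convex_hull_linear_image[OF f(1)] unfolding triangle_P112_def by metis
  qed
  ultimately show ?thesis using L that by blast
qed

section \<open>Minimality and the shared apex\<close>

definition positively_spanning :: "'a::real_inner set \<Rightarrow> bool" where
  "positively_spanning Q \<longleftrightarrow> (\<forall>n. (\<forall>q\<in>Q. 0 \<le> n \<bullet> q) \<longrightarrow> n = 0)"

lemma positively_spanningI_P112:
  fixes x y z w :: "'a::real_inner"
  assumes "{x, y, -2 *\<^sub>R x - y, z, w} \<subseteq> Q" "z + w \<in> span {x, y}" "span {x, y, z} = UNIV"
  shows "positively_spanning Q"
  unfolding positively_spanning_def
proof (intro allI impI)
  fix n :: 'a assume "\<forall>q\<in>Q. 0 \<le> n \<bullet> q"
  then have nonneg: "0 \<le> n \<bullet> x" "0 \<le> n \<bullet> y" "0 \<le> n \<bullet> (-2 *\<^sub>R x - y)" "0 \<le> n \<bullet> z" "0 \<le> n \<bullet> w"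
    using assms(1) by auto
  then have xy: "orthogonal n x" "orthogonal n y" by (simp_all add: orthogonal_def inner_diff_right)
  have "orthogonal n (z + w)" using orthogonal_to_span[OF assms(2)] xy by blast
  then have "orthogonal n z" using nonneg(4,5) by (simp add: orthogonal_def inner_add_right)
  then have "orthogonal n n" using orthogonal_to_span[of n "{x, y, z}"] xy assms(3) by blast
  then show "n = 0" by (simp add: orthogonal_def)
qed

lemma supporting_hyperplane_at_0:
  fixes K :: "'a::euclidean_space set"
  assumes "convex K" "0 \<in> K" "0 \<notin> interior K"
  obtains n where "n \<noteq> 0" "\<forall>x\<in>K. 0 \<le> n \<bullet> x"
proof (cases "interior K = {}")
  case True
  then obtain a b where a: "a \<noteq> 0" and K: "K \<subseteq> {x. a \<bullet> x = b}"
    using empty_interior_subset_hyperplane[OF assms(1)] by metis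
  then have "b = 0" using assms(2) by auto
  then have "\<forall>x\<in>K. 0 \<le> a \<bullet> x" using K by auto
  then show ?thesis using that a by blast
next
  case False
  obtain n where n: "n \<noteq> 0" "\<forall>x\<in>interior K. 0 \<le> n \<bullet> x"
    using separating_hyperplane_set_0[OF convex_interior[OF assms(1)] assms(3)] by blast
  have "closure (interior K) \<subseteq> {x. 0 \<le> n \<bullet> x}"
    by (rule closure_minimal) (use n closed_halfspace_ge[of 0 n] in auto)
  then have "K \<subseteq> {x. 0 \<le> n \<bullet> x}"
    using convex_closure_interior[OF assms(1) False] closure_subset by blast
  then show ?thesis using n(1) that by blast
qed

lemma fano_polytope_compact_convex:
  assumes "fano_polytope P"
  shows "compact P" "convex P"
  using assms unfolding fano_polytope_def by (auto intro: compact_convex_hull finite_imp_compact)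

text \<open>Dropping the vertex \<open>\<rho>\<close> keeps the origin and every interior lattice point, so what
  breaks is that \<open>0\<close> is no longer interior.\<close>

lemma minimal_fano_supporting_functional:
  assumes "minimal_fano_polytope P" "\<rho> extreme_point_of P"
  obtains n where "n \<noteq> 0" "\<forall>q \<in> P \<inter> lattice3 - {\<rho>}. 0 \<le> n \<bullet> q"
proof -
  have fano: "fano_polytope P" and not_fano: "\<not> fano_polytope (convex hull (P \<inter> lattice3 - {\<rho>}))"
    using assms unfolding minimal_fano_polytope_def by auto
  have interior_P: "interior P \<inter> lattice3 = {0}" using fano unfolding fano_polytope_def by blast
  have P: "compact P" "convex P" using fano by (rule fano_polytope_compact_convex)+
  define Q where "Q = P \<inter> lattice3 - {\<rho>}"
  have "finite Q"
    unfolding Q_def using finite_bounded_Int_lattice3[OF compact_imp_bounded[OF P(1)]] by simp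
  have hull_Q: "convex hull Q \<subseteq> P" unfolding Q_def by (rule hull_minimal) (use P(2) in auto)
  have "0 \<in> interior P" using interior_P by auto
  moreover have "\<rho> \<notin> interior P" by (rule extreme_point_not_in_interior[OF assms(2)])
  ultimately have "0 \<in> Q" unfolding Q_def using interior_subset interior_P by auto
  then have "0 \<in> convex hull Q" by (simp add: hull_inc)
  moreover have "0 \<notin> interior (convex hull Q)"
  proof
    assume interior_Q: "0 \<in> interior (convex hull Q)"
    have "fano_polytope (convex hull Q)"
      unfolding fano_polytope_def
    proof (intro conjI)
      show "\<exists>V. finite V \<and> V \<subseteq> lattice3 \<and> convex hull Q = convex hull V"
        using \<open>finite Q\<close> unfolding Q_def by blast
      show "aff_dim (convex hull Q) = 3"
        using aff_dim_nonempty_interior[of "convex hull Q"] interior_Q by auto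
      have "interior (convex hull Q) \<subseteq> interior P" using hull_Q by (rule interior_mono)
      then show "interior (convex hull Q) \<inter> lattice3 = {0}"
        using interior_P interior_Q by blast
    qed
    then show False using not_fano unfolding Q_def by simp
  qed
  ultimately obtain n where "n \<noteq> 0" "\<forall>x\<in>convex hull Q. 0 \<le> n \<bullet> x"
    using supporting_hyperplane_at_0[OF convex_convex_hull] by blast
  then show ?thesis using that hull_inc unfolding Q_def by (metis (no_types, lifting))
qed

lemma minimal_fano_extreme_point_mem:
  assumes "minimal_fano_polytope P" "\<rho> extreme_point_of P" "Q \<subseteq> P \<inter> lattice3"
    "positively_spanning Q"
  shows "\<rho> \<in> Q"
proof (rule ccontr)
  assume "\<rho> \<notin> Q"
  obtain n where "n \<noteq> 0" "\<forall>q \<in> P \<inter> lattice3 - {\<rho>}. 0 \<le> n \<bullet> q"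
    using minimal_fano_supporting_functional[OF assms(1,2)] .
  then show False using assms(3,4) \<open>\<rho> \<notin> Q\<close> unfolding positively_spanning_def by blast
qed

lemma minimal_fano_eq_convex_hull:
  assumes "minimal_fano_polytope P" "Q \<subseteq> P \<inter> lattice3" "positively_spanning Q"
  shows "P = convex hull Q"
proof
  have "compact P" "convex P"
    using assms(1) fano_polytope_compact_convex unfolding minimal_fano_polytope_def by auto
  then have "P = convex hull {x. x extreme_point_of P}" by (rule Krein_Milman_Minkowski)
  also have "\<dots> \<subseteq> convex hull Q"
    using minimal_fano_extreme_point_mem[OF assms(1) _ assms(2,3)] by (intro hull_mono) blast
  finally show "P \<subseteq> convex hull Q" .
  show "convex hull Q \<subseteq> P"
    using assms(2) \<open>convex P\<close> by (intro hull_minimal) auto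
qed

lemma P112_not_both_in_other_plane:
  fixes a b s t :: "'a::euclidean_space"
  assumes "independent {a, b}" "a \<noteq> b" "span {a, b} \<noteq> span {s, t}"
  shows "\<not> {b, -2 *\<^sub>R a - b} \<subseteq> span {s, t}"
proof
  assume "{b, -2 *\<^sub>R a - b} \<subseteq> span {s, t}"
  then have "(-1/2) *\<^sub>R (b + (-2 *\<^sub>R a - b)) \<in> span {s, t}"
    by (intro span_scale span_add) auto
  then have "a \<in> span {s, t}" by simp
  then have "span {a, b} = span {s, t}"
    using span_pair_eq[OF assms(1,2)] \<open>{b, -2 *\<^sub>R a - b} \<subseteq> span {s, t}\<close> by blast
  then show False using assms(3) by blast
qed

lemma P112_apex_in_plane:
  assumes P: "minimal_fano_polytope P" and ab: "plane_lattice_basis a b"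
    and st: "plane_lattice_basis s t"
    and ext: "{a, b, -2 *\<^sub>R a - b, s, t, -2 *\<^sub>R s - t} \<subseteq> {x. x extreme_point_of P}"
    and not_both: "\<not> {b, -2 *\<^sub>R a - b} \<subseteq> span {s, t}"
  shows "a \<in> span {s, t}"
proof (rule ccontr)
  assume a: "a \<notin> span {s, t}"
  define c where "c = -2 *\<^sub>R a - b"
  define Q where "Q = {s, t, -2 *\<^sub>R s - t, a, -a}"
  have "convex P" using P fano_polytope_compact_convex unfolding minimal_fano_polytope_def by blast
  have in_P: "a \<in> P" "b \<in> P" "c \<in> P" "s \<in> P" "t \<in> P" "-2 *\<^sub>R s - t \<in> P"
    using ext unfolding c_def extreme_point_of_def by auto
  have "closed_segment b c \<subseteq> P" using \<open>convex P\<close> in_P(2,3) convex_contains_segment by blast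
  then have "midpoint b c \<in> P" using midpoint_in_closed_segment by blast
  then have "-a \<in> P" unfolding c_def midpoint_P112_triangle .
  moreover have "a \<in> lattice3" "s \<in> lattice3" "t \<in> lattice3"
    using ab st unfolding plane_lattice_basis_def by blast+
  ultimately have "Q \<subseteq> P \<inter> lattice3"
    using in_P unfolding Q_def by (simp add: lattice3_iff)
  moreover have "span {s, t, a} = UNIV"
    using span_insert_eq_UNIV st a unfolding plane_lattice_basis_def by blast
  then have "positively_spanning Q"
    unfolding Q_def by (rule positively_spanningI_P112[of s t a "-a", rotated 2]) (simp_all add: span_zero)
  ultimately have vertices: "\<rho> \<in> Q" if "\<rho> extreme_point_of P" for \<rho>
    using minimal_fano_extreme_point_mem[OF P that] by blast
  obtain \<rho> where \<rho>: "\<rho> \<in> {b, c}" "\<rho> \<notin> span {s, t}" using not_both unfolding c_def by blast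
  have "-2 *\<^sub>R s - t \<in> span {s, t}" by (intro span_diff span_scale span_base) simp_all
  then have "{s, t, -2 *\<^sub>R s - t} \<subseteq> span {s, t}" by (simp add: span_base)
  then have "\<rho> \<notin> {s, t, -2 *\<^sub>R s - t}" using \<rho>(2) by blast
  moreover have "\<rho> \<notin> {a, -a}"
    using \<rho>(1) P112_triangle_distinct[of a b] ab unfolding c_def plane_lattice_basis_def by auto
  moreover have "\<rho> extreme_point_of P" using \<rho>(1) ext unfolding c_def by blast
  ultimately show False using vertices unfolding Q_def by blast
qed

lemma plane_lattice_basis_common_line:
  assumes ab: "plane_lattice_basis a b" and st: "plane_lattice_basis s t"
    and planes: "span {a, b} \<noteq> span {s, t}" and "a \<in> span {s, t}" "s \<in> span {a, b}"
  obtains i where "i \<in> \<int>" "a = i *\<^sub>R s"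
proof -
  obtain i j where ij: "i \<in> \<int>" "j \<in> \<int>" "a = i *\<^sub>R s + j *\<^sub>R t"
    using ab st assms(4) unfolding plane_lattice_basis_def by blast
  have "j = 0"
  proof (rule ccontr)
    assume "j \<noteq> 0"
    then have "t = (1 / j) *\<^sub>R (a - i *\<^sub>R s)" using ij(3) by simp
    moreover have "a \<in> span {a, b}" by (simp add: span_base)
    ultimately have "t \<in> span {a, b}" using assms(5) by (simp add: span_diff span_scale)
    then have "span {s, t} = span {a, b}"
      using span_pair_eq st assms(5) unfolding plane_lattice_basis_def by blast
    then show False using planes by simp
  qed
  then show ?thesis using ij that by simp
qed

lemma P112_triangles_share_apex:
  assumes P: "minimal_fano_polytope P" and ab: "plane_lattice_basis a b"
    and st: "plane_lattice_basis s t" and planes: "span {a, b} \<noteq> span {s, t}"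
    and ext: "{a, b, -2 *\<^sub>R a - b, s, t, -2 *\<^sub>R s - t} \<subseteq> {x. x extreme_point_of P}"
  shows "s = a"
proof -
  have indep: "independent {a, b}" "a \<noteq> b" "independent {s, t}" "s \<noteq> t"
    using ab st unfolding plane_lattice_basis_def by blast+
  have "a \<in> span {s, t}"
    using P112_apex_in_plane[OF P ab st ext] P112_not_both_in_other_plane[OF indep(1,2) planes] .
  moreover have "s \<in> span {a, b}"
  proof (rule P112_apex_in_plane[OF P st ab])
    show "{s, t, -2 *\<^sub>R s - t, a, b, -2 *\<^sub>R a - b} \<subseteq> {x. x extreme_point_of P}" using ext by auto
    show "\<not> {t, -2 *\<^sub>R s - t} \<subseteq> span {a, b}"
      using P112_not_both_in_other_plane[OF indep(3,4)] planes by metis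
  qed
  ultimately obtain i i' where i: "i \<in> \<int>" "a = i *\<^sub>R s" and i': "i' \<in> \<int>" "s = i' *\<^sub>R a"
    using plane_lattice_basis_common_line ab st planes by metis
  have "(i' * i - 1) *\<^sub>R a = 0" using i(2) i'(2) by (simp add: algebra_simps)
  then have "i' * i = 1" using P112_triangle_distinct(1)[OF indep(1,2)] by simp
  then have "i' = 1 \<or> i' = -1" by (rule Ints_mult_eq_1D[OF i'(1) i(1)])
  moreover have "b \<in> P" "-2 *\<^sub>R a - b \<in> P" using ext unfolding extreme_point_of_def by auto
  then have "s \<noteq> -a" using minus_P112_apex_not_extreme[OF indep(1,2)] ext by blast
  ultimately show ?thesis using i'(2) by auto
qed

lemma two_P112_triangles_normal_form:
  assumes P: "minimal_fano_polytope P"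
    and "P112_triangle_in L1 T1" "P112_triangle_in L2 T2" "L1 \<noteq> L2"
    and "\<forall>x. x extreme_point_of T1 \<longrightarrow> x extreme_point_of P"
    and "\<forall>x. x extreme_point_of T2 \<longrightarrow> x extreme_point_of P"
  obtains a b t where "plane_lattice_basis a b" "t \<in> lattice3" "t \<notin> span {a, b}"
    "t extreme_point_of P" "P = convex hull {a, b, -2 *\<^sub>R a - b, t, -2 *\<^sub>R a - t}"
proof -
  obtain a b where ab: "plane_lattice_basis a b" and L1: "L1 = span {a, b}"
    and T1: "T1 = convex hull {a, b, -2 *\<^sub>R a - b}"
    using P112_triangle_inE[OF assms(2)] .
  obtain s t where st: "plane_lattice_basis s t" and L2: "L2 = span {s, t}"
    and T2: "T2 = convex hull {s, t, -2 *\<^sub>R s - t}"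
    using P112_triangle_inE[OF assms(3)] .
  have indep: "independent {a, b}" "a \<noteq> b" "independent {s, t}" "s \<noteq> t"
    using ab st unfolding plane_lattice_basis_def by blast+
  have planes: "span {a, b} \<noteq> span {s, t}" using L1 L2 assms(4) by simp
  have "x extreme_point_of P" if "x \<in> {a, b, -2 *\<^sub>R a - b}" for x
    using assms(5) extreme_point_of_P112_triangle[OF indep(1,2) that] T1 by blast
  moreover have "x extreme_point_of P" if "x \<in> {s, t, -2 *\<^sub>R s - t}" for x
    using assms(6) extreme_point_of_P112_triangle[OF indep(3,4) that] T2 by blast
  ultimately have ext: "{a, b, -2 *\<^sub>R a - b, s, t, -2 *\<^sub>R s - t} \<subseteq> {x. x extreme_point_of P}"
    by blast
  have "s = a" by (rule P112_triangles_share_apex[OF P ab st planes ext])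
  have t: "t \<notin> span {a, b}"
  proof
    assume "t \<in> span {a, b}"
    moreover have "s \<in> span {a, b}" using \<open>s = a\<close> by (simp add: span_base)
    ultimately have "span {s, t} = span {a, b}" using span_pair_eq[OF indep(3,4)] by blast
    then show False using planes by simp
  qed
  define Q where "Q = {a, b, -2 *\<^sub>R a - b, t, -2 *\<^sub>R a - t}"
  have "Q \<subseteq> {x. x extreme_point_of P}" using ext \<open>s = a\<close> unfolding Q_def by auto
  moreover have "a \<in> lattice3" "b \<in> lattice3" "t \<in> lattice3"
    using ab st unfolding plane_lattice_basis_def by blast+
  ultimately have "Q \<subseteq> P \<inter> lattice3"
    unfolding Q_def extreme_point_of_def by (auto simp: lattice3_iff)
  moreover have "positively_spanning Q"
  proof (rule positively_spanningI_P112[of a b t "-2 *\<^sub>R a - t"])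
    show "t + (-2 *\<^sub>R a - t) \<in> span {a, b}" by (simp add: span_neg span_scale span_base)
  qed (use span_insert_eq_UNIV[OF indep(1,2) t] Q_def in auto)
  ultimately have "P = convex hull Q" by (rule minimal_fano_eq_convex_hull[OF P])
  then show ?thesis
    using that ab \<open>t \<in> lattice3\<close> t ext \<open>s = a\<close> unfolding Q_def by auto
qed

section \<open>Coordinates adapted to the triangle\<close>

definition colmat :: "real^3 \<Rightarrow> real^3 \<Rightarrow> real^3 \<Rightarrow> real^3^3" where
  "colmat p q r = transpose (vector [p, q, r])"

lemma colmat_mult: "colmat p q r *v y = y$1 *\<^sub>R p + y$2 *\<^sub>R q + y$3 *\<^sub>R r"
  by (simp add: colmat_def vec_eq_iff matrix_vector_mult_def transpose_def sum_3 algebra_simps)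

lemma colmat_lattice3:
  assumes "p \<in> lattice3" "q \<in> lattice3" "r \<in> lattice3" "w \<in> lattice3"
  shows "colmat p q r *v w \<in> lattice3"
  using assms unfolding colmat_mult
  by (intro lattice3_add lattice3_scaleR) (simp_all add: lattice3_iff)

lemma bij_colmat:
  assumes "span {p, q, r} = UNIV"
  shows "bij (\<lambda>y. colmat p q r *v y)"
proof -
  have "surj (\<lambda>y. colmat p q r *v y)"
    unfolding surj_def
  proof
    fix x :: "real^3"
    obtain u v w where "x = u *\<^sub>R p + v *\<^sub>R q + w *\<^sub>R r" using assms span_triple_iff by blast
    then show "\<exists>y. x = colmat p q r *v y" by (intro exI[of _ "vector [u, v, w]"]) (simp add: colmat_mult)
  qed
  moreover have "inj (\<lambda>y. colmat p q r *v y)"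
    using linear_surj_imp_inj[OF matrix_vector_mul_linear] calculation by blast
  ultimately show ?thesis by (simp add: bij_def)
qed

lemma det_in_Ints: "(\<forall>i j. (A::real^3^3)$i$j \<in> \<int>) \<Longrightarrow> det A \<in> \<int>"
  unfolding det_3 by (intro Ints_diff Ints_add Ints_mult) auto

lemma colmat_entries_in_Ints:
  "p \<in> lattice3 \<Longrightarrow> q \<in> lattice3 \<Longrightarrow> r \<in> lattice3 \<Longrightarrow> \<forall>i j. colmat p q r $ i $ j \<in> \<int>"
  unfolding colmat_def by (auto simp: lattice3_def transpose_def forall_3)

lemma colmat_in_GL3Z:
  assumes "p \<in> lattice3" "q \<in> lattice3" "r \<in> lattice3"
    and onto: "lattice3 \<subseteq> (\<lambda>w. colmat p q r *v w) ` lattice3"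
  shows "colmat p q r \<in> GL3Z"
proof -
  define M where "M = colmat p q r"
  have M_int: "\<forall>i j. M$i$j \<in> \<int>" unfolding M_def using assms(1-3) by (rule colmat_entries_in_Ints)
  have preimage: "\<exists>w\<in>lattice3. M *v w = x" if "x \<in> lattice3" for x
    using onto that unfolding M_def by blast
  obtain w1 w2 w3 where w: "w1 \<in> lattice3" "w2 \<in> lattice3" "w3 \<in> lattice3"
    "M *v w1 = vector [1, 0, 0]" "M *v w2 = vector [0, 1, 0]" "M *v w3 = vector [0, 0, 1]"
    using preimage[of "vector [1, 0, 0]"] preimage[of "vector [0, 1, 0]"] preimage[of "vector [0, 0, 1]"]
    by (auto simp: lattice3_iff)
  define K where "K = colmat w1 w2 w3"
  have K_int: "\<forall>i j. K$i$j \<in> \<int>" unfolding K_def using w(1-3) by (rule colmat_entries_in_Ints)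
  have "M ** K = mat 1"
  proof (rule iffD2[OF matrix_eq], intro allI)
    fix y :: "real^3"
    have "(M ** K) *v y = y$1 *\<^sub>R (M *v w1) + y$2 *\<^sub>R (M *v w2) + y$3 *\<^sub>R (M *v w3)"
      unfolding K_def matrix_vector_mul_assoc[symmetric] colmat_mult
      by (simp add: matrix_vector_right_distrib matrix_vector_mult_scaleR)
    then show "(M ** K) *v y = mat 1 *v y" unfolding w(4-6) by (simp add: vec_eq_iff forall_3)
  qed
  then have "det M * det K = 1" using det_mul[of M K] by simp
  then have "det M = 1 \<or> det M = -1"
    using Ints_mult_eq_1D det_in_Ints[OF M_int] det_in_Ints[OF K_int] by blast
  then have "\<bar>det M\<bar> = 1" by auto
  then show ?thesis using M_int unfolding GL3Z_def M_def by blast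
qed

lemma colmat_image_polytopeA:
  "(\<lambda>x. colmat a b t *v x) ` polytopeA = convex hull {a, b, -2 *\<^sub>R a - b, t, -2 *\<^sub>R a - t}"
proof -
  have "(\<lambda>x. colmat a b t *v x) ` {vector [1,0,0], vector [0,1,0], vector [0,0,1],
      vector [-2,-1,0], vector [-2,0,-1]} = {a, b, -2 *\<^sub>R a - b, t, -2 *\<^sub>R a - t}"
  proof -
    have "colmat a b t *v vector [-2,-1,0] = -2 *\<^sub>R a - b"
      "colmat a b t *v vector [-2,0,-1] = -2 *\<^sub>R a - t"
      by (simp_all add: colmat_mult vec_eq_iff)
    then show ?thesis by (simp add: colmat_mult insert_commute)
  qed
  then show ?thesis
    unfolding polytopeA_def convex_hull_linear_image[OF matrix_vector_mul_linear] by simp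
qed

lemma colmat_image_polytopeB:
  "(\<lambda>x. colmat a b u *v x) ` polytopeB
     = convex hull {a, b, -2 *\<^sub>R a - b, a + b + 2 *\<^sub>R u, -2 *\<^sub>R a - (a + b + 2 *\<^sub>R u)}"
proof -
  have "(\<lambda>x. colmat a b u *v x) ` {vector [1,0,0], vector [0,1,0], vector [-2,-1,0],
      vector [1,1,2], vector [-3,-1,-2]} = {a, b, -2 *\<^sub>R a - b, a + b + 2 *\<^sub>R u, -2 *\<^sub>R a - (a + b + 2 *\<^sub>R u)}"
  proof -
    have "colmat a b u *v vector [1,0,0] = a" "colmat a b u *v vector [0,1,0] = b"
      "colmat a b u *v vector [-2,-1,0] = -2 *\<^sub>R a - b"
      "colmat a b u *v vector [1,1,2] = a + b + 2 *\<^sub>R u"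
      "colmat a b u *v vector [-3,-1,-2] = -2 *\<^sub>R a - (a + b + 2 *\<^sub>R u)"
      by (simp_all add: colmat_mult vec_eq_iff)
    then show ?thesis by (simp only: image_insert image_empty)
  qed
  then show ?thesis
    unfolding polytopeB_def convex_hull_linear_image[OF matrix_vector_mul_linear] by simp
qed

section \<open>Lattices containing \<open>\<int>\<^sup>3\<close>\<close>

lemma superlattice_min_height:
  fixes \<Lambda> :: "(real^3) set"
  assumes diff: "\<And>x y. x \<in> \<Lambda> \<Longrightarrow> y \<in> \<Lambda> \<Longrightarrow> x - y \<in> \<Lambda>" and lattice: "lattice3 \<subseteq> \<Lambda>"
    and discrete: "\<And>S. bounded S \<Longrightarrow> finite (S \<inter> \<Lambda>)"
  obtains g where "g \<in> \<Lambda>" "0 < g$3" "\<And>y. y \<in> \<Lambda> \<Longrightarrow> 0 < y$3 \<Longrightarrow> g$3 \<le> y$3"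
proof -
  define S where "S = cbox 0 (vector [1, 1, 1]) \<inter> \<Lambda> \<inter> {y. 0 < y$3}"
  have "finite S"
    unfolding S_def using discrete[OF bounded_cbox] by (rule finite_subset[rotated]) blast
  have "vector [0, 0, 1] \<in> S"
    using lattice unfolding S_def by (auto simp: mem_box_cart forall_3 lattice3_iff)
  define h where "h = Min ((\<lambda>y. y$3) ` S)"
  have "h \<in> (\<lambda>y. y$3) ` S"
    unfolding h_def using \<open>finite S\<close> \<open>vector [0, 0, 1] \<in> S\<close> by (intro Min_in) auto
  then obtain g where g: "g \<in> S" "g$3 = h" by blast
  have "h \<le> y$3" if "y \<in> \<Lambda>" "0 < y$3" for y
  proof -
    define d :: "real^3" where "d = vector [of_int \<lfloor>y$1\<rfloor>, of_int \<lfloor>y$2\<rfloor>, of_int (\<lceil>y$3\<rceil> - 1)]"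
    have "d \<in> \<Lambda>" using lattice vector_of_int_in_lattice3 unfolding d_def by blast
    then have "y - d \<in> \<Lambda>" using diff that(1) by blast
    moreover have "\<lceil>y$3\<rceil> \<ge> 1" using that(2) by linarith
    ultimately have "y - d \<in> S"
      unfolding S_def d_def by (simp add: mem_box_cart forall_3; linarith)
    then have "h \<le> (y - d)$3" unfolding h_def using \<open>finite S\<close> by (intro Min_le) (auto simp del: vector_minus_component)
    also have "(y - d)$3 \<le> y$3" unfolding d_def using \<open>\<lceil>y$3\<rceil> \<ge> 1\<close> by simp
    finally show ?thesis .
  qed
  then show ?thesis using that[of g] g unfolding S_def by auto
qed

definition frac_point :: "int \<Rightarrow> int \<Rightarrow> int \<Rightarrow> real^3" where
  "frac_point N J K = vector [of_int J / of_int N, of_int K / of_int N, 1 / of_int N]"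

lemma superlattice_height_generator:
  fixes \<Lambda> :: "(real^3) set"
  assumes diff: "\<And>x y. x \<in> \<Lambda> \<Longrightarrow> y \<in> \<Lambda> \<Longrightarrow> x - y \<in> \<Lambda>"
    and scale: "\<And>c x. c \<in> \<int> \<Longrightarrow> x \<in> \<Lambda> \<Longrightarrow> c *\<^sub>R x \<in> \<Lambda>"
    and lattice: "lattice3 \<subseteq> \<Lambda>"
    and base: "\<And>y. y \<in> \<Lambda> \<Longrightarrow> y$3 = 0 \<Longrightarrow> y \<in> lattice3"
    and discrete: "\<And>S. bounded S \<Longrightarrow> finite (S \<inter> \<Lambda>)"
  obtains N J K :: int where "1 \<le> N" "frac_point N J K \<in> \<Lambda>"
    "\<And>y. y \<in> \<Lambda> \<Longrightarrow> \<exists>k::int. y - of_int k *\<^sub>R frac_point N J K \<in> lattice3"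
proof -
  obtain g where g: "g \<in> \<Lambda>" "0 < g$3" and min: "\<And>y. y \<in> \<Lambda> \<Longrightarrow> 0 < y$3 \<Longrightarrow> g$3 \<le> y$3"
    using superlattice_min_height[OF diff lattice discrete] by blast
  have reduce: "\<exists>k::int. (y - of_int k *\<^sub>R g)$3 = 0 \<and> y - of_int k *\<^sub>R g \<in> lattice3"
    if "y \<in> \<Lambda>" for y
  proof -
    define k where "k = \<lfloor>y$3 / g$3\<rfloor>"
    have in_\<Lambda>: "y - of_int k *\<^sub>R g \<in> \<Lambda>" using diff scale that g(1) by simp
    have "of_int k \<le> y$3 / g$3" "y$3 / g$3 < of_int k + 1" unfolding k_def by linarith+
    then have "of_int k * g$3 \<le> y$3" "y$3 < of_int k * g$3 + g$3"
      using g(2) by (simp_all add: field_simps)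
    then have "0 \<le> (y - of_int k *\<^sub>R g)$3" "(y - of_int k *\<^sub>R g)$3 < g$3" by simp_all
    moreover have "\<not> 0 < (y - of_int k *\<^sub>R g)$3"
      using min[OF in_\<Lambda>] \<open>(y - of_int k *\<^sub>R g)$3 < g$3\<close> by linarith
    ultimately have "(y - of_int k *\<^sub>R g)$3 = 0" by linarith
    then show ?thesis using base in_\<Lambda> by blast
  qed
  have e3: "vector [0, 0, 1] \<in> \<Lambda>" using lattice by (auto simp: lattice3_iff)
  then obtain N :: int where "(vector [0, 0, 1] - of_int N *\<^sub>R g)$3 = 0" using reduce by blast
  then have N: "of_int N * g$3 = 1" by simp
  then have "0 < real_of_int N * g$3" by simp
  then have "0 < real_of_int N" using g(2) zero_less_mult_pos2 by blast
  then have "1 \<le> N" by simp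
  have "of_int N *\<^sub>R g - vector [0, 0, 1] \<in> \<Lambda>" using diff scale g(1) e3 by simp
  moreover have "(of_int N *\<^sub>R g - vector [0, 0, 1])$3 = 0" using N by simp
  ultimately have "of_int N *\<^sub>R g - vector [0, 0, 1] \<in> lattice3" by (rule base)
  then have "of_int N * g$1 \<in> \<int>" "of_int N * g$2 \<in> \<int>" by (simp_all add: lattice3_iff)
  then obtain J K where "of_int N * g$1 = of_int J" "of_int N * g$2 = of_int K" by (metis Ints_cases)
  then have "g$1 = of_int J / of_int N" "g$2 = of_int K / of_int N" "g$3 = 1 / of_int N"
    using N \<open>0 < real_of_int N\<close> by (simp_all add: eq_divide_eq mult.commute)
  then have "g = frac_point N J K" by (simp add: frac_point_def vec_eq_iff forall_3)
  then show ?thesis using that \<open>1 \<le> N\<close> g(1) reduce by blast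
qed

section \<open>Lattice points of \<open>polytopeA\<close> at fractional heights\<close>

text \<open>\<open>(X, Y, Z) / n\<close> satisfies the facet inequalities of \<open>polytopeA\<close>; the multiple
  \<open>m (j, k, 1) / n\<close> is congruent modulo \<open>\<int>\<^sup>3\<close> to a point of \<open>polytopeA\<close> at height
  \<open>m / n\<close>.\<close>

definition in_scaled_polytopeA :: "int \<Rightarrow> int \<Rightarrow> int \<Rightarrow> int \<Rightarrow> bool" where
  "in_scaled_polytopeA n X Y Z \<longleftrightarrow>
     X - 3*Y + Z \<le> n \<and> X + Y + Z \<le> n \<and> X + Y - 3*Z \<le> n \<and> X - 3*Y - 3*Z \<le> n \<and> - X + Y + Z \<le> n"

definition polytopeA_meets_multiple :: "int \<Rightarrow> int \<Rightarrow> int \<Rightarrow> bool" where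
  "polytopeA_meets_multiple n j k \<longleftrightarrow>
     (\<exists>m X Y. 1 \<le> m \<and> m < n \<and> n dvd (X - m*j) \<and> n dvd (Y - m*k) \<and> in_scaled_polytopeA n X Y m)"

definition least_congruent_above :: "int \<Rightarrow> int \<Rightarrow> int \<Rightarrow> int" where
  "least_congruent_above n r l = r mod n + n * ((l - r mod n + n - 1) div n)"

lemma least_congruent_above_dvd: "n dvd (least_congruent_above n r l - r)"
proof -
  have "least_congruent_above n r l - r = n * ((l - r mod n + n - 1) div n) - (r - r mod n)"
    unfolding least_congruent_above_def by simp
  then show ?thesis by (simp add: minus_mod_eq_mult_div)
qed

lemma least_congruent_above_bounds:
  assumes "0 < n"
  shows "l \<le> least_congruent_above n r l" "least_congruent_above n r l < l + n"
proof -
  define d where "d = l - r mod n"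
  have "n * ((d + n - 1) div n) + (d + n - 1) mod n = d + n - 1" by (rule mult_div_mod_eq)
  moreover have "0 \<le> (d + n - 1) mod n" "(d + n - 1) mod n < n" using assms by simp_all
  ultimately have "d \<le> n * ((d + n - 1) div n)" "n * ((d + n - 1) div n) < d + n" by linarith+
  then show "l \<le> least_congruent_above n r l" "least_congruent_above n r l < l + n"
    unfolding least_congruent_above_def d_def by linarith+
qed

text \<open>The facet \<open>-X + Y + Z \<le> n\<close> is the only lower bound on \<open>X\<close>, so the least admissible
  value of \<open>X\<close> in its residue class is the best candidate.\<close>

definition polytopeA_witness_search :: "int \<Rightarrow> int \<Rightarrow> int \<Rightarrow> bool" where
  "polytopeA_witness_search n j k \<longleftrightarrow>
     list_ex (\<lambda>m. list_ex (\<lambda>Y. in_scaled_polytopeA n (least_congruent_above n (m*j) (Y + m - n)) Y m)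
       [(m*k) mod n, (m*k) mod n - n]) [1..n-1]"

lemma polytopeA_witness_search_small:
  "list_all (\<lambda>n. list_all (\<lambda>j. list_all (\<lambda>k. (n, j, k) = (2, 1, 1) \<or> polytopeA_witness_search n j k)
     [0..n-1]) [0..n-1]) [2..11]"
  by code_simp

lemma polytopeA_meets_multiple_if_search:
  assumes "polytopeA_witness_search n j k"
  shows "polytopeA_meets_multiple n j k"
proof -
  from assms obtain m Y where m: "1 \<le> m" "m < n" and Y: "Y \<in> {(m*k) mod n, (m*k) mod n - n}"
    and X: "in_scaled_polytopeA n (least_congruent_above n (m*j) (Y + m - n)) Y m"
    unfolding polytopeA_witness_search_def list_ex_iff by force
  have "n dvd (Y - m*k)"
  proof -
    have "n dvd (m*k - (m*k) mod n)" by simp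
    then have "n dvd ((m*k) mod n - m*k)" by (simp add: dvd_diff_commute)
    moreover from Y have "Y - m*k = (m*k) mod n - m*k \<or> Y - m*k = ((m*k) mod n - m*k) - n"
      by auto
    ultimately show ?thesis by (metis dvd_diff dvd_refl)
  qed
  then show ?thesis
    unfolding polytopeA_meets_multiple_def using m X least_congruent_above_dvd by blast
qed

lemma polytopeA_meets_multiple_large:
  assumes "12 \<le> n" "0 \<le> k" "k < n"
  shows "polytopeA_meets_multiple n j k"
proof -
  obtain m Y where mY: "1 \<le> m" "m \<le> 3" "n dvd (Y - m*k)" "4 * \<bar>Y\<bar> \<le> n"
  proof -
    consider "4*k \<le> n" | "4*k \<ge> 3*n" | "8*k \<ge> 3*n \<and> 8*k \<le> 5*n" | "4*k > n \<and> 8*k < 3*n"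
      | "8*k > 5*n \<and> 4*k < 3*n"
      by linarith
    then show ?thesis
    proof cases
      case 1 then show ?thesis using assms by (intro that[of 1 k]) auto
    next
      case 2 then show ?thesis using assms by (intro that[of 1 "k - n"]) auto
    next
      case 3 then show ?thesis using assms by (intro that[of 2 "2*k - n"]) (auto simp: abs_if)
    next
      case 4 then show ?thesis using assms by (intro that[of 3 "3*k - n"]) (auto simp: abs_if)
    next
      case 5 then show ?thesis using assms
        by (intro that[of 3 "3*k - 2*n"]) (auto simp: abs_if dvd_def intro: exI[of _ "-2"])
    qed
  qed
  define X where "X = least_congruent_above n (m*j) (Y + m - n)"
  have "Y + m - n \<le> X" "X < Y + m"
    using least_congruent_above_bounds[where n = n and r = "m*j" and l = "Y + m - n"] assms(1) unfolding X_def by auto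
  then have "in_scaled_polytopeA n X Y m"
    unfolding in_scaled_polytopeA_def using mY(1,2,4) assms(1) by linarith
  moreover have "n dvd (X - m*j)" unfolding X_def by (rule least_congruent_above_dvd)
  moreover have "m < n" using mY(2) assms(1) by linarith
  ultimately show ?thesis
    unfolding polytopeA_meets_multiple_def using mY(1,3) by blast
qed

lemma polytopeA_meets_multiple:
  assumes "2 \<le> n" "0 \<le> j" "j < n" "0 \<le> k" "k < n" "(n, j, k) \<noteq> (2, 1, 1)"
  shows "polytopeA_meets_multiple n j k"
proof (cases "n \<le> 11")
  case True
  then have "n \<in> set [2..11]" "j \<in> set [0..n-1]" "k \<in> set [0..n-1]"
    unfolding set_upto using assms by simp_all
  then have "polytopeA_witness_search n j k"
    using polytopeA_witness_search_small assms(6) unfolding list_all_iff by blast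
  then show ?thesis by (rule polytopeA_meets_multiple_if_search)
next
  case False
  then show ?thesis using polytopeA_meets_multiple_large assms by auto
qed

lemma polytopeA_memI:
  fixes x y z :: real
  assumes "x - 3*y + z \<le> 1" "x + y + z \<le> 1" "x + y - 3*z \<le> 1" "x - 3*y - 3*z \<le> 1"
    "- x + y + z \<le> 1"
  shows "vector [x, y, z] \<in> polytopeA"
proof -
  txt \<open>Barycentric weights: the vertices \<open>(-2,-1,0)\<close> and \<open>(-2,0,-1)\<close> share the excess
    \<open>S = (1 - x - y - z) / 4\<close> so that the weights of \<open>(0,1,0)\<close> and \<open>(0,0,1)\<close> stay
    nonnegative.\<close>
  define S where "S = (1 - x - y - z) / 4"
  define yn where "yn = max 0 (-y)"
  define zn where "zn = max 0 (-z)"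
  define u3 where "u3 = yn + (S - yn - zn) / 2"
  define u5 where "u5 = zn + (S - yn - zn) / 2"
  have "S \<ge> yn + zn" unfolding S_def yn_def zn_def using assms by (simp add: max_def)
  define lam :: "nat \<Rightarrow> real" where
    "lam = (\<lambda>i. if i = 1 then x + 2*u3 + 2*u5 else if i = 2 then y + u3
      else if i = 3 then u3 else if i = 4 then z + u5 else u5)"
  define pt :: "nat \<Rightarrow> real^3" where
    "pt = (\<lambda>i. if i = 1 then vector [1,0,0] else if i = 2 then vector [0,1,0]
      else if i = 3 then vector [-2,-1,0] else if i = 4 then vector [0,0,1] else vector [-2,0,-1])"
  have "0 \<le> lam i" if "i \<in> {1,2,3,4,5}" for i
  proof -
    have "u3 \<ge> yn" "u5 \<ge> zn" "yn \<ge> 0" "zn \<ge> 0" "yn \<ge> -y" "zn \<ge> -z"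
      using \<open>S \<ge> yn + zn\<close> unfolding u3_def u5_def yn_def zn_def by auto
    moreover have "x + 2*u3 + 2*u5 \<ge> 0"
      unfolding u3_def u5_def S_def using assms by (simp add: field_simps)
    ultimately show ?thesis using that unfolding lam_def by auto
  qed
  moreover have "(\<Sum>i\<in>{1,2,3,4,5}. lam i) = 1"
    unfolding lam_def u3_def u5_def S_def by (simp add: field_simps)
  ultimately have "(\<Sum>i\<in>{1,2,3,4,5}. lam i *\<^sub>R pt i) \<in> polytopeA"
    unfolding polytopeA_def by (intro convex_sum) (auto simp: pt_def intro: hull_inc)
  moreover have "(\<Sum>i\<in>{1,2,3,4,5}. lam i *\<^sub>R pt i) = vector [x, y, z]"
    unfolding lam_def pt_def u3_def u5_def S_def by (simp add: vec_eq_iff forall_3 field_simps)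
  ultimately show ?thesis by simp
qed

lemma polytopeA_memI_scaled:
  assumes "0 < n" "in_scaled_polytopeA n X Y Z"
  shows "vector [of_int X / of_int n, of_int Y / of_int n, of_int Z / of_int n] \<in> polytopeA"
proof -
  have "of_int W / of_int n \<le> (1::real)" if "W \<le> n" for W
    using that assms(1) by simp
  from this[of "X - 3*Y + Z"] this[of "X + Y + Z"] this[of "X + Y - 3*Z"] this[of "X - 3*Y - 3*Z"]
    this[of "- X + Y + Z"]
  show ?thesis
    using assms(2) unfolding in_scaled_polytopeA_def
    by (intro polytopeA_memI) (simp_all add: diff_divide_distrib add_divide_distrib)
qed

lemma polytopeA_contains_frac_multiple:
  assumes "2 \<le> N" "\<not> (N = 2 \<and> odd J \<and> odd K)"
  obtains m q1 q2 :: int where "1 \<le> m" "m < N"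
    "of_int m *\<^sub>R frac_point N J K - vector [of_int q1, of_int q2, 0] \<in> polytopeA"
proof -
  have "(N, J mod N, K mod N) \<noteq> (2, 1, 1)" using assms by (auto simp: odd_iff_mod_2_eq_one)
  then have "polytopeA_meets_multiple N (J mod N) (K mod N)"
    using assms(1) by (intro polytopeA_meets_multiple) auto
  then obtain m X Y where m: "1 \<le> m" "m < N" and XY: "N dvd (X - m * (J mod N))"
    "N dvd (Y - m * (K mod N))" and in_A: "in_scaled_polytopeA N X Y m"
    unfolding polytopeA_meets_multiple_def by blast
  have "N dvd (m * W - Z)" if "N dvd (Z - m * (W mod N))" for W Z
  proof -
    have "m * W - Z = m * (W - W mod N) - (Z - m * (W mod N))" by (simp add: algebra_simps)
    moreover have "N dvd m * (W - W mod N)" by (simp add: minus_mod_eq_mult_div)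
    ultimately show ?thesis using that by (metis dvd_diff)
  qed
  then have "N dvd (m * J - X)" "N dvd (m * K - Y)" using XY by blast+
  then obtain q1 q2 where q: "m * J - X = N * q1" "m * K - Y = N * q2" by (auto simp: dvd_def)
  have "of_int m *\<^sub>R frac_point N J K - vector [of_int q1, of_int q2, 0]
      = vector [of_int X / of_int N, of_int Y / of_int N, of_int m / of_int N]"
  proof -
    have "real_of_int X = of_int m * of_int J - of_int N * of_int q1"
      "real_of_int Y = of_int m * of_int K - of_int N * of_int q2"
      using arg_cong[OF q(1), of real_of_int] arg_cong[OF q(2), of real_of_int] by simp_all
    then show ?thesis using assms(1) by (simp add: frac_point_def vec_eq_iff forall_3 field_simps)
  qed
  also have "\<dots> \<in> polytopeA" using assms(1) in_A by (intro polytopeA_memI_scaled) auto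
  finally show ?thesis using m that by blast
qed

lemma colmat_preimage_lattice3:
  assumes ab: "plane_lattice_basis a b" and t: "t \<in> lattice3" and span: "span {a, b, t} = UNIV"
  defines "\<Lambda> \<equiv> {y. colmat a b t *v y \<in> lattice3}"
  shows "\<And>x y. x \<in> \<Lambda> \<Longrightarrow> y \<in> \<Lambda> \<Longrightarrow> x - y \<in> \<Lambda>"
    and "\<And>c x. c \<in> \<int> \<Longrightarrow> x \<in> \<Lambda> \<Longrightarrow> c *\<^sub>R x \<in> \<Lambda>"
    and "lattice3 \<subseteq> \<Lambda>"
    and "\<And>y. y \<in> \<Lambda> \<Longrightarrow> y$3 = 0 \<Longrightarrow> y \<in> lattice3"
    and "\<And>S. bounded S \<Longrightarrow> finite (S \<inter> \<Lambda>)"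
proof -
  let ?M = "colmat a b t"
  have a: "a \<in> lattice3" "b \<in> lattice3"
    and lattice_ab: "\<forall>x \<in> lattice3 \<inter> span {a, b}. \<exists>u v. u \<in> \<int> \<and> v \<in> \<int> \<and> x = u *\<^sub>R a + v *\<^sub>R b"
    using ab unfolding plane_lattice_basis_def by blast+
  have inj: "inj (\<lambda>y. ?M *v y)" using bij_colmat[OF span] by (simp add: bij_def)
  show "x - y \<in> \<Lambda>" if "x \<in> \<Lambda>" "y \<in> \<Lambda>" for x y
    using that unfolding \<Lambda>_def by (simp add: matrix_vector_mult_diff_distrib lattice3_diff)
  show "c *\<^sub>R x \<in> \<Lambda>" if "c \<in> \<int>" "x \<in> \<Lambda>" for c x
    using that unfolding \<Lambda>_def by (simp add: matrix_vector_mult_scaleR lattice3_scaleR)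
  show "lattice3 \<subseteq> \<Lambda>" unfolding \<Lambda>_def using colmat_lattice3 a t by blast
  show "y \<in> lattice3" if "y \<in> \<Lambda>" "y$3 = 0" for y
  proof -
    have "?M *v y = y$1 *\<^sub>R a + y$2 *\<^sub>R b" using that(2) by (simp add: colmat_mult)
    then have "?M *v y \<in> span {a, b}" using span_pair_iff by blast
    then have "?M *v y \<in> lattice3 \<inter> span {a, b}" using that(1) unfolding \<Lambda>_def by simp
    then obtain u v where uv: "u \<in> \<int>" "v \<in> \<int>" "?M *v y = u *\<^sub>R a + v *\<^sub>R b"
      using lattice_ab by blast
    then have "?M *v y = ?M *v vector [u, v, 0]" by (simp add: colmat_mult)
    then have "y = vector [u, v, 0]" by (rule injD[OF inj])
    then show ?thesis using uv by (simp add: lattice3_iff)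
  qed
  show "finite (S \<inter> \<Lambda>)" if "bounded S" for S
  proof -
    have "bounded ((\<lambda>y. ?M *v y) ` S)"
      using that bounded_linear_image matrix_vector_mul_bounded_linear by blast
    then have "finite ((\<lambda>y. ?M *v y) ` S \<inter> lattice3)" by (rule finite_bounded_Int_lattice3)
    then have "finite ((\<lambda>y. ?M *v y) -` ((\<lambda>y. ?M *v y) ` S \<inter> lattice3))"
      using inj by (rule finite_vimageI)
    moreover have "S \<inter> \<Lambda> \<subseteq> (\<lambda>y. ?M *v y) -` ((\<lambda>y. ?M *v y) ` S \<inter> lattice3)"
      by (auto simp: \<Lambda>_def)
    ultimately show ?thesis by (rule finite_subset[rotated])
  qed
qed

section \<open>Classification\<close>

lemma P112_pair_supporting_functional:
  assumes ab: "plane_lattice_basis a b" and t: "t \<in> lattice3" "t \<notin> span {a, b}"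
    and P: "P = convex hull {a, b, -2 *\<^sub>R a - b, t, -2 *\<^sub>R a - t}"
    and n: "n \<noteq> 0" "\<forall>q \<in> P \<inter> lattice3 - {t}. 0 \<le> n \<bullet> q"
  shows "n \<bullet> a = 0" "n \<bullet> b = 0" "n \<bullet> t < 0"
proof -
  have indep: "independent {a, b}" "a \<noteq> b" and a: "a \<in> lattice3" "b \<in> lattice3"
    using ab unfolding plane_lattice_basis_def by blast+
  have "-2 *\<^sub>R a - t \<noteq> t"
  proof
    assume "-2 *\<^sub>R a - t = t"
    then have "t = - a" by (simp add: vec_eq_iff)
    then show False using t(2) by (simp add: span_base span_neg)
  qed
  moreover have "-2 *\<^sub>R a - b \<in> span {a, b}" by (intro span_diff span_scale span_base) simp_all
  then have "{a, b, -2 *\<^sub>R a - b} \<subseteq> span {a, b}" by (simp add: span_base)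
  ultimately have "{a, b, -2 *\<^sub>R a - b, -2 *\<^sub>R a - t} \<subseteq> P \<inter> lattice3 - {t}"
    using t a unfolding P by (auto simp: hull_inc lattice3_iff)
  then have nonneg: "0 \<le> n \<bullet> a" "0 \<le> n \<bullet> b" "0 \<le> n \<bullet> (-2 *\<^sub>R a - b)" "0 \<le> n \<bullet> (-2 *\<^sub>R a - t)"
    using n(2) by auto
  then show ab_0: "n \<bullet> a = 0" "n \<bullet> b = 0" by (simp_all add: inner_diff_right)
  then have "n \<bullet> t \<le> 0" using nonneg(4) by (simp add: inner_diff_right)
  moreover have "n \<bullet> t \<noteq> 0"
  proof
    assume "n \<bullet> t = 0"
    then have "orthogonal n x" if "x \<in> {a, b, t}" for x using that ab_0 by (auto simp: orthogonal_def)
    then have "orthogonal n n"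
      using orthogonal_to_span[of n "{a, b, t}"] span_insert_eq_UNIV[OF indep t(2)] by blast
    then show False using n(1) by (simp add: orthogonal_def)
  qed
  ultimately show "n \<bullet> t < 0" by linarith
qed

lemma colmat_polytopeA_height_gap:
  assumes span: "span {a, b, t} = UNIV"
    and n: "n \<bullet> a = 0" "n \<bullet> b = 0" "n \<bullet> t < 0"
    and support: "\<forall>q \<in> (\<lambda>y. colmat a b t *v y) ` polytopeA \<inter> lattice3 - {t}. 0 \<le> n \<bullet> q"
    and y: "colmat a b t *v y \<in> lattice3" "y \<in> polytopeA"
  shows "y$3 \<le> 0 \<or> 1 \<le> y$3"
proof (rule ccontr)
  assume "\<not> ?thesis"
  then have height: "0 < y$3" "y$3 < 1" by auto
  have "colmat a b t *v y \<noteq> t"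
  proof
    assume "colmat a b t *v y = t"
    then have "colmat a b t *v y = colmat a b t *v vector [0, 0, 1]" by (simp add: colmat_mult)
    then have "y = vector [0, 0, 1]" using bij_colmat[OF span] by (simp add: bij_def inj_def)
    then show False using height(2) by simp
  qed
  then have "0 \<le> n \<bullet> (colmat a b t *v y)" using support y by blast
  also have "n \<bullet> (colmat a b t *v y) = y$3 * (n \<bullet> t)"
    using n(1,2) by (simp add: colmat_mult inner_add_right)
  finally show False using height(1) n(3) mult_pos_neg by fastforce
qed

lemma P112_pair_superlattice:
  assumes ab: "plane_lattice_basis a b" and t: "t \<in> lattice3" "t \<notin> span {a, b}"
    and P: "P = convex hull {a, b, -2 *\<^sub>R a - b, t, -2 *\<^sub>R a - t}"
    and n: "n \<noteq> 0" "\<forall>q \<in> P \<inter> lattice3 - {t}. 0 \<le> n \<bullet> q"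
  obtains N J K :: int where "N = 1 \<or> (N = 2 \<and> odd J \<and> odd K)"
    "colmat a b t *v frac_point N J K \<in> lattice3"
    "\<And>x. x \<in> lattice3 \<Longrightarrow>
       \<exists>k w. w \<in> lattice3 \<and> x = colmat a b t *v (of_int k *\<^sub>R frac_point N J K + w)"
proof -
  define M where "M = colmat a b t"
  define \<Lambda> where "\<Lambda> = {y. M *v y \<in> lattice3}"
  have span: "span {a, b, t} = UNIV"
    using span_insert_eq_UNIV t(2) ab unfolding plane_lattice_basis_def by blast
  note \<Lambda> = colmat_preimage_lattice3[OF ab t(1) span, folded M_def, folded \<Lambda>_def]
  obtain N J K where N: "1 \<le> N" "frac_point N J K \<in> \<Lambda>"
    and reduce: "\<And>y. y \<in> \<Lambda> \<Longrightarrow> \<exists>k::int. y - of_int k *\<^sub>R frac_point N J K \<in> lattice3"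
    using superlattice_height_generator[OF \<Lambda>] by blast
  have gap: "y$3 \<le> 0 \<or> 1 \<le> y$3" if "y \<in> \<Lambda>" "y \<in> polytopeA" for y
    using colmat_polytopeA_height_gap[OF span P112_pair_supporting_functional[OF assms]] n(2) that
    unfolding P colmat_image_polytopeA[symmetric] \<Lambda>_def M_def by blast
  have "N = 1 \<or> (N = 2 \<and> odd J \<and> odd K)"
  proof (rule ccontr)
    assume "\<not> ?thesis"
    then have "2 \<le> N" "\<not> (N = 2 \<and> odd J \<and> odd K)" using N(1) by auto
    then obtain m q1 q2 where m: "1 \<le> m" "m < N"
      and in_A: "of_int m *\<^sub>R frac_point N J K - vector [of_int q1, of_int q2, 0] \<in> polytopeA"
      by (rule polytopeA_contains_frac_multiple)
    have "of_int m *\<^sub>R frac_point N J K \<in> \<Lambda>" by (rule \<Lambda>(2)[OF Ints_of_int N(2)])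
    moreover have "vector [of_int q1, of_int q2, of_int 0] \<in> \<Lambda>"
      using \<Lambda>(3) vector_of_int_in_lattice3 by blast
    ultimately have in_\<Lambda>: "of_int m *\<^sub>R frac_point N J K - vector [of_int q1, of_int q2, 0] \<in> \<Lambda>"
      using \<Lambda>(1) by simp
    have "(of_int m *\<^sub>R frac_point N J K - vector [of_int q1, of_int q2, 0])$3
        = of_int m / of_int N"
      by (simp add: frac_point_def)
    moreover have "0 < real_of_int m / of_int N" "real_of_int m / of_int N < 1"
      using m by simp_all
    ultimately show False using gap[OF in_\<Lambda> in_A] by linarith
  qed
  moreover have "M *v frac_point N J K \<in> lattice3" using N(2) unfolding \<Lambda>_def by simp
  moreover have "\<exists>k w. w \<in> lattice3 \<and> x = M *v (of_int k *\<^sub>R frac_point N J K + w)"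
    if "x \<in> lattice3" for x
  proof -
    obtain y where y: "x = M *v y" using bij_colmat[OF span] unfolding M_def bij_def surj_def by blast
    then have "y \<in> \<Lambda>" using that unfolding \<Lambda>_def by simp
    then obtain k :: int where "y - of_int k *\<^sub>R frac_point N J K \<in> lattice3" using reduce by blast
    then show ?thesis using y by (intro exI[of _ k] exI[of _ "y - of_int k *\<^sub>R frac_point N J K"]) simp
  qed
  ultimately show ?thesis using that unfolding M_def by blast
qed

lemma colmat_half_point: "t = a + b + 2 *\<^sub>R (colmat a b t *v vector [-1/2, -1/2, 1/2])"
  by (simp add: colmat_mult vec_eq_iff)

lemma colmat_half_point_in_GL3Z:
  fixes a b t :: "real^3"
  defines "u \<equiv> colmat a b t *v vector [-1/2, -1/2, 1/2]"
  assumes "a \<in> lattice3" "b \<in> lattice3" "u \<in> lattice3"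
    and decomp: "\<And>x. x \<in> lattice3 \<Longrightarrow> \<exists>k w. w \<in> lattice3 \<and> x = of_int k *\<^sub>R u + colmat a b t *v w"
  shows "colmat a b u \<in> GL3Z"
proof (rule colmat_in_GL3Z[OF assms(2-4)], rule subsetI)
  fix x assume "x \<in> lattice3"
  then obtain k w where w: "w \<in> lattice3" "x = of_int k *\<^sub>R u + colmat a b t *v w"
    using decomp by blast
  have t_eq: "t = a + b + 2 *\<^sub>R u" using colmat_half_point[of t a b] unfolding u_def .
  have "x = colmat a b u *v vector [w$1 + w$3, w$2 + w$3, of_int k + 2 * w$3]"
    using w(2) t_eq by (simp add: colmat_mult algebra_simps)
  then show "x \<in> (\<lambda>w. colmat a b u *v w) ` lattice3" using w(1) by (auto simp: lattice3_iff)
qed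

lemma frac_point_index_two:
  assumes "odd J" "odd K"
  obtains d where "d \<in> lattice3" "frac_point 2 J K = vector [-1/2, -1/2, 1/2] + d"
proof -
  obtain J' K' where "J = 2 * J' + 1" "K = 2 * K' + 1" using assms by (metis oddE)
  then have "frac_point 2 J K = vector [-1/2, -1/2, 1/2] + vector [of_int (J' + 1), of_int (K' + 1), 0]"
    unfolding frac_point_def by (simp add: vec_eq_iff forall_3 field_simps)
  moreover have "vector [of_int (J' + 1), of_int (K' + 1), of_int 0] \<in> lattice3"
    by (rule vector_of_int_in_lattice3)
  ultimately show ?thesis using that by simp
qed

lemma P112_pair_classification:
  assumes ab: "plane_lattice_basis a b" and t: "t \<in> lattice3" "t \<notin> span {a, b}"
    and P: "P = convex hull {a, b, -2 *\<^sub>R a - b, t, -2 *\<^sub>R a - t}"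
    and n: "n \<noteq> 0" "\<forall>q \<in> P \<inter> lattice3 - {t}. 0 \<le> n \<bullet> q"
  shows "GL3Z_equivalent P polytopeA \<or> GL3Z_equivalent P polytopeB"
proof -
  define M where "M = colmat a b t"
  have a: "a \<in> lattice3" "b \<in> lattice3" using ab unfolding plane_lattice_basis_def by blast+
  obtain N J K where index: "N = 1 \<or> (N = 2 \<and> odd J \<and> odd K)"
    and g: "M *v frac_point N J K \<in> lattice3"
    and decomp: "\<And>x. x \<in> lattice3 \<Longrightarrow>
       \<exists>k w. w \<in> lattice3 \<and> x = M *v (of_int k *\<^sub>R frac_point N J K + w)"
    using P112_pair_superlattice[OF assms, folded M_def] by blast
  consider "N = 1" | "N = 2" "odd J" "odd K" using index by blast
  then show ?thesis
  proof cases
    case 1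
    have "frac_point N J K \<in> lattice3" using 1 by (simp add: frac_point_def lattice3_iff)
    then have "lattice3 \<subseteq> (\<lambda>w. M *v w) ` lattice3"
      using decomp by (fastforce intro: lattice3_add lattice3_scaleR)
    then have "colmat a b t \<in> GL3Z" using colmat_in_GL3Z a t(1) unfolding M_def by blast
    then show ?thesis
      using colmat_image_polytopeA P unfolding GL3Z_equivalent_def by metis
  next
    case 2
    define u where "u = M *v vector [-1/2, -1/2, 1/2]"
    obtain d where d: "d \<in> lattice3" "frac_point N J K = vector [-1/2, -1/2, 1/2] + d"
      using frac_point_index_two[OF 2(2,3)] 2(1) by blast
    have g_eq: "M *v frac_point N J K = u + M *v d"
      unfolding u_def d(2) by (simp add: matrix_vector_right_distrib)
    have "M *v d \<in> lattice3" unfolding M_def using colmat_lattice3 a t(1) d(1) by blast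
    then have "u \<in> lattice3" using g lattice3_diff[of "M *v frac_point N J K" "M *v d"] g_eq by simp
    moreover have "\<exists>k w. w \<in> lattice3 \<and> x = of_int k *\<^sub>R u + M *v w" if x: "x \<in> lattice3" for x
    proof -
      obtain k w where w: "w \<in> lattice3" "x = M *v (of_int k *\<^sub>R frac_point N J K + w)"
        using decomp[OF x] by blast
      then have "x = of_int k *\<^sub>R u + M *v (of_int k *\<^sub>R d + w)"
        using g_eq by (simp add: matrix_vector_right_distrib matrix_vector_mult_scaleR algebra_simps)
      moreover have "of_int k *\<^sub>R d + w \<in> lattice3"
        using w(1) d(1) by (simp add: lattice3_add lattice3_scaleR)
      ultimately show ?thesis by blast
    qed
    ultimately have "colmat a b u \<in> GL3Z"
      using colmat_half_point_in_GL3Z[of a b t] a unfolding u_def M_def by blast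
    moreover have "P = (\<lambda>x. colmat a b u *v x) ` polytopeB"
      unfolding P colmat_image_polytopeB u_def M_def colmat_half_point[of t a b, symmetric] ..
    ultimately show ?thesis unfolding GL3Z_equivalent_def by blast
  qed
qed

theorem lemma4p13:
  fixes P :: "(real^3) set"
  assumes "minimal_fano_polytope P"
    and "P112_triangle_in L1 T1" and "P112_triangle_in L2 T2" and "L1 \<noteq> L2"
    and "\<forall>x. x extreme_point_of T1 \<longrightarrow> x extreme_point_of P"
    and "\<forall>x. x extreme_point_of T2 \<longrightarrow> x extreme_point_of P"
  shows "GL3Z_equivalent P polytopeA \<or> GL3Z_equivalent P polytopeB"
proof -
  obtain a b t where ab: "plane_lattice_basis a b" and t: "t \<in> lattice3" "t \<notin> span {a, b}"
    and vertex: "t extreme_point_of P" and P: "P = convex hull {a, b, -2 *\<^sub>R a - b, t, -2 *\<^sub>R a - t}"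
    using two_P112_triangles_normal_form[OF assms] by blast
  obtain n where "n \<noteq> 0" "\<forall>q \<in> P \<inter> lattice3 - {t}. 0 \<le> n \<bullet> q"
    using minimal_fano_supporting_functional[OF assms(1) vertex] by blast
  then show ?thesis using P112_pair_classification[OF ab t P] by blast
qed

end
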